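(* Let $g:\mathbb{C}\to\mathbb{C}$ be holomorphic at $0$ with $g(0)=0$ and $g'(0)\neq 0$, and let $\varphi:\mathbb{N}\to\mathbb{C}\setminus\{0\}$. Let $(P_n(x))_{n\ge 0}$ be a sequence of Appell polynomials of type $(g,\varphi)$ with generating function $f$, i.e. $f$ is holomorphic at $0$, $f(0)\neq 0$, and $$\sum_{n\ge 0}P_n(x)\frac{t^n}{\varphi(0)\varphi(1)\cdots\varphi(n)}=f(t)e^{x g(t)}$$ for all $x$ and all $t$ near $0$. Then $P_n(-x)=(-1)^nP_n(x)$ for all $n\ge0$ and all $x$ if and only if $g$ is odd and $f$ is even.
   Context: Here $\mathbb{N}=\{0,1,2,\dots\}$. A sequence of Appell polynomials of type $(g,\varphi)$ is a sequence of polynomials for which some $f$ holomorphic at $0$ with $f(0)\ne0$ satisfies the displayed identity. *)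

theory Defs
  imports "HOL-Complex_Analysis.Complex_Analysis" "HOL-Computational_Algebra.Polynomial"
begin

end

theory Submission
  imports Defs
begin

text \<open>
  Replacing \<open>x\<close> by \<open>-x\<close> and \<open>t\<close> by \<open>-t\<close> in the generating function and comparing
  power series coefficients shows that \<open>P\<^sub>n(-x) = (-1)\<^sup>n P\<^sub>n(x)\<close> for all \<open>n\<close> is equivalent to
  \<open>f(t) exp(-x g(t)) = f(-t) exp(x g(-t))\<close> near \<open>0\<close> for every \<open>x\<close>. Taking \<open>x = 0\<close> makes \<open>f\<close>
  even; then \<open>x = 1\<close> gives \<open>exp(g(t) + g(-t)) = 1\<close>, and as \<open>g(t) + g(-t)\<close> is continuous and
  vanishes at \<open>0\<close>, it stays in a disc on which \<open>exp\<close> is injective, so \<open>g\<close> is odd.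
\<close>

lemma eventually_nhds_0_uminus:
  fixes P :: "'a::real_normed_vector \<Rightarrow> bool"
  assumes "\<forall>\<^sub>F t in nhds 0. P t"
  shows "\<forall>\<^sub>F t in nhds 0. P (- t)"
proof -
  have "\<forall>\<^sub>F t in filtermap uminus (nhds 0). P t"
    using assms by (simp add: filtermap_nhds_minus)
  then show ?thesis
    by (simp add: eventually_filtermap)
qed

lemma powser_coeff_eq_0_if_sums_0_nhds:
  fixes a :: "nat \<Rightarrow> 'a::{real_normed_field,banach}"
  assumes "\<forall>\<^sub>F t in nhds 0. (\<lambda>n. a n * t ^ n) sums 0"
  shows "a m = 0"
proof (rule ccontr)
  assume am: "a m \<noteq> 0"
  obtain r where "r > 0" and sums_0: "\<And>t. norm (t - 0) < r \<Longrightarrow> (\<lambda>n. a n * (t - 0) ^ n) sums 0"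
    using assms unfolding eventually_nhds_metric by (auto simp: dist_norm)
  show False
  proof (cases "m = 0")
    case True
    then show False
      using sums_0[of 0] \<open>r > 0\<close> am by (simp add: powser_sums_zero_iff)
  next
    case False
    then have "m > 0"
      by simp
    \<comment> \<open>a power series with a nonzero coefficient of positive index has isolated zeros\<close>
    show False
    proof (rule powser_0_nonzero[where \<xi>=0 and f="\<lambda>_. 0::'a", OF \<open>r > 0\<close> sums_0 refl am \<open>m > 0\<close>])
      fix s :: real
      assume "s > 0" and nonzero: "\<And>z::'a. z \<in> cball 0 s - {0} \<Longrightarrow> 0 \<noteq> (0::'a)"
      have "of_real s \<in> cball (0::'a) s - {0}"
        using \<open>s > 0\<close> by simp
      then have "(0::'a) \<noteq> 0"
        by (rule nonzero)
      then show False
        by simp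
    qed
  qed
qed

lemma powser_coeffs_unique_nhds:
  fixes a b :: "nat \<Rightarrow> 'a::{real_normed_field,banach}"
  assumes "\<forall>\<^sub>F t in nhds 0. (\<lambda>n. a n * t ^ n) sums s t"
    and "\<forall>\<^sub>F t in nhds 0. (\<lambda>n. b n * t ^ n) sums s t"
  shows "a = b"
proof
  fix m
  have "\<forall>\<^sub>F t in nhds 0. (\<lambda>n. (a n - b n) * t ^ n) sums 0"
    using eventually_conj[OF assms]
    by eventually_elim (use sums_diff in \<open>fastforce simp: algebra_simps\<close>)
  then show "a m = b m"
    using powser_coeff_eq_0_if_sums_0_nhds by fastforce
qed

lemma generating_function_parity_iff:
  fixes p :: "nat \<Rightarrow> complex \<Rightarrow> complex" and c :: "nat \<Rightarrow> complex"
    and F :: "complex \<Rightarrow> complex \<Rightarrow> complex"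
  assumes c_nz: "\<And>n. c n \<noteq> 0"
    and gen: "\<And>x. \<forall>\<^sub>F t in nhds 0. (\<lambda>n. p n x * t ^ n / c n) sums F x t"
  shows "(\<forall>n x. p n (- x) = (-1) ^ n * p n x) \<longleftrightarrow> (\<forall>x. \<forall>\<^sub>F t in nhds 0. F (- x) t = F x (- t))"
proof -
  have reflected: "\<forall>\<^sub>F t in nhds 0. (\<lambda>n. ((-1) ^ n * p n x / c n) * t ^ n) sums F x (- t)" for x
  proof -
    have "(\<lambda>n. p n x * (- t) ^ n / c n) = (\<lambda>n. ((-1) ^ n * p n x / c n) * t ^ n)" for t
      by (simp add: power_minus[of t] mult_ac)
    then show ?thesis
      using eventually_nhds_0_uminus[OF gen[of x]] by simp
  qed
  have shifted: "\<forall>\<^sub>F t in nhds 0. (\<lambda>n. (p n (- x) / c n) * t ^ n) sums F (- x) t" for x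
    using gen[of "- x"] by simp
  show ?thesis
  proof
    assume parity: "\<forall>n x. p n (- x) = (-1) ^ n * p n x"
    show "\<forall>x. \<forall>\<^sub>F t in nhds 0. F (- x) t = F x (- t)"
    proof
      fix x
      have "\<forall>\<^sub>F t in nhds 0. (\<lambda>n. ((-1) ^ n * p n x / c n) * t ^ n) sums F (- x) t"
        using shifted[of x] parity by simp
      then show "\<forall>\<^sub>F t in nhds 0. F (- x) t = F x (- t)"
        using reflected[of x] by eventually_elim (rule sums_unique2)
    qed
  next
    assume reflection: "\<forall>x. \<forall>\<^sub>F t in nhds 0. F (- x) t = F x (- t)"
    have reflected_shifted:
      "\<forall>\<^sub>F t in nhds 0. (\<lambda>n. ((-1) ^ n * p n x / c n) * t ^ n) sums F (- x) t" for x
      using reflected[of x] reflection[rule_format, of x] by eventually_elim simp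
    have "(\<lambda>n. p n (- x) / c n) = (\<lambda>n. (-1) ^ n * p n x / c n)" for x
      by (rule powser_coeffs_unique_nhds[OF shifted reflected_shifted])
    then show "\<forall>n x. p n (- x) = (-1) ^ n * p n x"
      using c_nz by (metis divide_cancel_right)
  qed
qed

lemma exp_reflection_iff_odd_even:
  fixes f g :: "complex \<Rightarrow> complex"
  assumes f_cont: "isCont f 0" and f0: "f 0 \<noteq> 0"
    and g_cont: "isCont g 0" and g0: "g 0 = 0"
  shows "(\<forall>x. \<forall>\<^sub>F t in nhds 0. f t * exp (- x * g t) = f (- t) * exp (x * g (- t))) \<longleftrightarrow>
         (\<forall>\<^sub>F t in nhds 0. g (- t) = - g t) \<and> (\<forall>\<^sub>F t in nhds 0. f (- t) = f t)"
proof
  assume reflection: "\<forall>x. \<forall>\<^sub>F t in nhds 0. f t * exp (- x * g t) = f (- t) * exp (x * g (- t))"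
  have f_even: "\<forall>\<^sub>F t in nhds 0. f (- t) = f t"
    using reflection[rule_format, of 0] by (auto elim: eventually_mono)
  have "(f \<longlongrightarrow> f 0) (nhds 0)"
    using f_cont by (simp add: isCont_def tendsto_at_iff_tendsto_nhds)
  then have f_nz: "\<forall>\<^sub>F t in nhds 0. f t \<noteq> 0"
    using f0 by (rule tendsto_imp_eventually_ne)
  have "isCont (\<lambda>t. g t + g (- t)) 0"
    using g_cont isCont_o2[where f=uminus and a=0 and g=g] by (auto intro: continuous_add)
  then have "((\<lambda>t. g t + g (- t)) \<longlongrightarrow> 0) (nhds 0)"
    using g0 tendsto_at_iff_tendsto_nhds[of "\<lambda>t. g t + g (- t)" 0] unfolding isCont_def by simp
  then have near_0: "\<forall>\<^sub>F t in nhds 0. g t + g (- t) \<in> ball 0 pi"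
    by (auto dest: tendstoD[OF _ pi_gt_zero] simp: dist_commute elim: eventually_mono)
  have "\<forall>\<^sub>F t in nhds 0. g (- t) = - g t"
    using eventually_conj[OF reflection[rule_format, of 1] eventually_conj[OF f_nz eventually_conj[OF f_even near_0]]]
  proof eventually_elim
    case (elim t)
    then have "exp (- g t) = exp (g (- t))"
      by (metis mult_cancel_left mult_minus_left mult_1)
    then have "exp (g t + g (- t)) = exp 0"
      by (simp add: exp_add exp_minus_inverse flip: \<open>exp (- g t) = _\<close>)
    then have "g t + g (- t) = 0"
      using inj_onD[OF inj_on_exp_pi[of 0]] elim by auto
    then show ?case
      by (simp add: add_eq_0_iff)
  qed
  with f_even show "(\<forall>\<^sub>F t in nhds 0. g (- t) = - g t) \<and> (\<forall>\<^sub>F t in nhds 0. f (- t) = f t)"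
    by blast
next
  assume "(\<forall>\<^sub>F t in nhds 0. g (- t) = - g t) \<and> (\<forall>\<^sub>F t in nhds 0. f (- t) = f t)"
  then have "\<forall>\<^sub>F t in nhds 0. g (- t) = - g t \<and> f (- t) = f t"
    by (simp add: eventually_conj_iff)
  then show "\<forall>x. \<forall>\<^sub>F t in nhds 0. f t * exp (- x * g t) = f (- t) * exp (x * g (- t))"
    by (auto elim: eventually_mono)
qed

theorem mainTheorem2:
  fixes g f :: "complex \<Rightarrow> complex"
    and \<phi> :: "nat \<Rightarrow> complex"
    and P :: "nat \<Rightarrow> complex poly"
  assumes g_hol: "g analytic_on {0}"
    and g0: "g 0 = 0"
    and g'0: "deriv g 0 \<noteq> 0"
    and \<phi>_nz: "\<And>n. \<phi> n \<noteq> 0"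
    and f_hol: "f analytic_on {0}"
    and f0: "f 0 \<noteq> 0"
    and gen: "\<And>x. \<forall>\<^sub>F t in nhds 0.
               (\<lambda>n. poly (P n) x * t ^ n / (\<Prod>k\<le>n. \<phi> k)) sums (f t * exp (x * g t))"
  shows "(\<forall>n x. poly (P n) (- x) = (-1) ^ n * poly (P n) x) \<longleftrightarrow>
         ((\<forall>\<^sub>F t in nhds 0. g (- t) = - g t) \<and> (\<forall>\<^sub>F t in nhds 0. f (- t) = f t))"
proof -
  have "(\<forall>n x. poly (P n) (- x) = (-1) ^ n * poly (P n) x) \<longleftrightarrow>
        (\<forall>x. \<forall>\<^sub>F t in nhds 0. f t * exp (- x * g t) = f (- t) * exp (x * g (- t)))"
    using generating_function_parity_iff[of "\<lambda>n. \<Prod>k\<le>n. \<phi> k" "\<lambda>n. poly (P n)" "\<lambda>x t. f t * exp (x * g t)"]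
      \<phi>_nz gen by simp
  also have "\<dots> \<longleftrightarrow> (\<forall>\<^sub>F t in nhds 0. g (- t) = - g t) \<and> (\<forall>\<^sub>F t in nhds 0. f (- t) = f t)"
    using exp_reflection_iff_odd_even f0 g0 f_hol g_hol by (simp add: analytic_at_imp_isCont)
  finally show ?thesis .
qed

end
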